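(* Let $n>1$ be an odd integer, $k\ge1$, and $p$ the smallest prime divisor of $n$. Then for every $\mathbf{m}\in\mathbb{Z}_n^k\setminus\{\mathbf{0}\}$ and every $\mathbf{c}\|t\in\mathbb{Z}_n^k\times\mathbb{Z}_n$, $$\Pr_{\mathbf{m}',\mathbf{x}\leftarrow\mathbb{Z}_n^k,\ \mathbf{y}\leftarrow(\mathbb{Z}_n^* )^k}\big[\mathbf{m}'=\mathbf{m}\ \big|\ \mathcal{E}_{\mathbf{x}\|\mathbf{y}}(\mathbf{m}')=\mathbf{c}\|t\big]\le\frac{1}{(p-1)n^{k-1}},$$ i.e., $\mathrm{C}^{n,k}_{\mathrm{RDH}}$ provides $\frac{1}{(p-1)n^{k-1}}$-secrecy on $\mathbb{Z}_n^k\setminus\{\mathbf{0}\}$.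
   Context: For $\mathbf{y}\in(\mathbb{Z}_n^* )^k$ and $\mathbf{m}\in\mathbb{Z}_n^k$ let $\Upsilon_{\mathbf{y}}(\mathbf{m})=\sum_{i=1}^k m_iy_i\bmod n$. The code $\mathrm{C}^{n,k}_{\mathrm{RDH}}$ has keys $\mathbf{x}\|\mathbf{y}\in\mathbb{Z}_n^k\times(\mathbb{Z}_n^* )^k$ and encryption $\mathcal{E}_{\mathbf{x}\|\mathbf{y}}(\mathbf{m})=(\mathbf{m}+\mathbf{x}\bmod n)\,\|\,\Upsilon_{\mathbf{y}}(\mathbf{m})$ for $\mathbf{m}\in\mathbb{Z}_n^k$. All random choices are uniform and independent; the conditioning event is assumed to have positive probability. *)

theory Defs
  imports Complex_Main "HOL-Library.FuncSet" "HOL-Computational_Algebra.Primes"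
begin

definition vecs :: "nat \<Rightarrow> nat \<Rightarrow> (nat \<Rightarrow> nat) set" where
  "vecs n k = {0..<k} \<rightarrow>\<^sub>E {0..<n}"

definition unit_vecs :: "nat \<Rightarrow> nat \<Rightarrow> (nat \<Rightarrow> nat) set" where
  "unit_vecs n k = {0..<k} \<rightarrow>\<^sub>E {a \<in> {0..<n}. coprime a n}"

definition Upsilon :: "nat \<Rightarrow> nat \<Rightarrow> (nat \<Rightarrow> nat) \<Rightarrow> (nat \<Rightarrow> nat) \<Rightarrow> nat" where
  "Upsilon n k y m = (\<Sum>i<k. m i * y i) mod n"

definition RDH_enc :: "nat \<Rightarrow> nat \<Rightarrow> (nat \<Rightarrow> nat) \<Rightarrow> (nat \<Rightarrow> nat) \<Rightarrow> (nat \<Rightarrow> nat)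
    \<Rightarrow> (nat \<Rightarrow> nat) \<times> nat" where
  "RDH_enc n k x y m = (restrict (\<lambda>i. (m i + x i) mod n) {0..<k}, Upsilon n k y m)"

definition RDH_event :: "nat \<Rightarrow> nat \<Rightarrow> (nat \<Rightarrow> nat) \<Rightarrow> nat
    \<Rightarrow> ((nat \<Rightarrow> nat) \<times> (nat \<Rightarrow> nat) \<times> (nat \<Rightarrow> nat)) set" where
  "RDH_event n k c t = {(m', x, y). m' \<in> vecs n k \<and> x \<in> vecs n k \<and> y \<in> unit_vecs n k
       \<and> RDH_enc n k x y m' = (c, t)}"

text \<open>Pr[m' = m | E_{x||y}(m') = c||t] under the uniform product distribution (counting).\<close>
definition RDH_cond_prob :: "nat \<Rightarrow> nat \<Rightarrow> (nat \<Rightarrow> nat) \<Rightarrow> (nat \<Rightarrow> nat) \<Rightarrow> nat \<Rightarrow> real" where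
  "RDH_cond_prob n k m c t =
     real (card {(m', x, y) \<in> RDH_event n k c t. m' = m}) / real (card (RDH_event n k c t))"

end

theory Submission
  imports Defs "HOL-Number_Theory.Cong"
begin

(* Given the ciphertext c || t, the message m' determines the pad x = c - m', so only the
   unit vector y remains free. Hence the numerator counts the unit vectors y with \<Upsilon>_y(m) = t,
   while the denominator counts pairs (y, m') with \<Upsilon>_y(m') = t, at least n^(k-1) for every y
   because one coordinate of m' can be solved for. If m_j \<noteq> 0, the maps y \<mapsto> y(j := a y_j) for
   1 \<le> a < p send the fibre {y. \<Upsilon>_y(m) = t} into the unit vectors with pairwise disjoint images,
   since a - a' is a unit mod n whenever a, a' < p; so the fibre has at most a 1/(p - 1) share of
   all unit vectors. *)

lemma coprime_of_less_min_prime_divisor: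
  fixes a n p :: nat
  assumes p_min: "\<forall>q. prime q \<and> q dvd n \<longrightarrow> p \<le> q" and "0 < a" "a < p"
  shows "coprime a n"
proof (rule ccontr)
  assume "\<not> coprime a n"
  then obtain q where "prime q" "q dvd gcd a n"
    using prime_factor_nat by (metis coprime_iff_gcd_eq_1)
  then have "q \<le> a" "p \<le> q"
    using p_min \<open>0 < a\<close> by (auto intro: dvd_imp_le)
  with \<open>a < p\<close> show False by linarith
qed

lemma eq_of_cong_mult_less_min_prime_divisor:
  fixes a a' b n p :: nat
  assumes p_min: "\<forall>q. prime q \<and> q dvd n \<longrightarrow> p \<le> q"
    and "a < p" "a' < p" "\<not> n dvd b" and cong: "[a * b = a' * b] (mod n)"
  shows "a = a'"
proof -
  have "a' \<le> a \<Longrightarrow> a = a'" if "a < p" "a' < p" "[a * b = a' * b] (mod n)" for a a'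
  proof (rule ccontr)
    assume "a' \<le> a" "a \<noteq> a'"
    then have "coprime n (a - a')"
      using coprime_of_less_min_prime_divisor[OF p_min, of "a - a'"] \<open>a < p\<close>
      by (simp add: coprime_commute)
    moreover have "n dvd (a - a') * b"
      using \<open>a' \<le> a\<close> cong_altdef_nat[of "a' * b" "a * b" n] that(3)
      by (simp add: cong_sym_eq diff_mult_distrib)
    ultimately have "n dvd b" by (simp add: coprime_dvd_mult_right_iff)
    with \<open>\<not> n dvd b\<close> show False ..
  qed
  then show ?thesis
    using assms(2,3) cong by (metis cong_sym nat_le_linear)
qed

lemma exists_cong_affine_unit:
  fixes y r t n :: nat
  assumes "coprime y n" "0 < n"
  shows "\<exists>v<n. [v * y + r = t] (mod n)"
proof -
  obtain u where u: "[y * u = 1] (mod n)"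
    using cong_solve_coprime_nat assms(1) by auto
  define w where "w = t + (n - 1) * r"
  have "[w * u mod n * y + r = w * u * y + r] (mod n)"
    by (intro cong_add cong_mult cong_refl) (simp add: cong_def)
  also have "w * u * y = w * (y * u)"
    by (simp add: ac_simps)
  also have "[w * (y * u) + r = w * 1 + r] (mod n)"
    using u by (intro cong_add cong_mult cong_refl)
  also have "w * 1 + r = t + n * r"
    using \<open>0 < n\<close> by (cases n) (simp_all add: w_def)
  also have "[t + n * r = t] (mod n)"
    by (simp add: cong_def)
  finally show ?thesis
    using \<open>0 < n\<close> by (intro exI[of _ "w * u mod n"]) simp
qed

lemma add_mod_eq_iff:
  fixes a b c n :: nat
  assumes "a < n" "b < n" "c < n"
  shows "(a + b) mod n = c \<longleftrightarrow> b = (c + n - a) mod n"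
proof
  assume "(a + b) mod n = c"
  then have "[c + n - a + a = b + a] (mod n)"
    using assms by (simp add: cong_def add.commute)
  then have "[c + n - a = b] (mod n)"
    by (rule cong_add_rcancel_nat[THEN iffD1])
  then show "b = (c + n - a) mod n"
    using \<open>b < n\<close> by (simp add: cong_def)
next
  assume "b = (c + n - a) mod n"
  then have "(a + b) mod n = (a + (c + n - a)) mod n"
    by (simp add: mod_add_right_eq)
  also have "\<dots> = c"
    using assms by simp
  finally show "(a + b) mod n = c" .
qed

definition RDH_pad :: "nat \<Rightarrow> nat \<Rightarrow> (nat \<Rightarrow> nat) \<Rightarrow> (nat \<Rightarrow> nat) \<Rightarrow> nat \<Rightarrow> nat" where
  "RDH_pad n k c m' = (\<lambda>i\<in>{0..<k}. (c i + n - m' i) mod n)"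

lemma RDH_pad_in_vecs: "0 < n \<Longrightarrow> RDH_pad n k c m' \<in> vecs n k"
  by (simp add: RDH_pad_def vecs_def)

lemma finite_vecs: "finite (vecs n k)"
  unfolding vecs_def by (rule finite_PiE) auto

lemma finite_unit_vecs: "finite (unit_vecs n k)"
  unfolding unit_vecs_def by (rule finite_PiE) auto

lemma finite_RDH_event: "finite (RDH_event n k c t)"
  by (rule finite_subset[of _ "vecs n k \<times> vecs n k \<times> unit_vecs n k"])
     (auto simp: RDH_event_def finite_vecs finite_unit_vecs)

lemma RDH_enc_eq_iff:
  assumes "c \<in> vecs n k" "m' \<in> vecs n k" "x \<in> vecs n k"
  shows "RDH_enc n k x y m' = (c, t) \<longleftrightarrow> x = RDH_pad n k c m' \<and> Upsilon n k y m' = t"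
proof -
  have "(m' i + x i) mod n = c i \<longleftrightarrow> x i = (c i + n - m' i) mod n" if "i < k" for i
    using assms that by (intro add_mod_eq_iff) (auto simp: vecs_def PiE_iff)
  then have "(\<forall>i<k. (m' i + x i) mod n = c i) \<longleftrightarrow> (\<forall>i<k. x i = (c i + n - m' i) mod n)"
    by blast
  then show ?thesis
    using assms by (auto simp: RDH_enc_def RDH_pad_def vecs_def PiE_iff extensional_def fun_eq_iff)
qed

lemma RDH_event_eq_image:
  assumes "0 < n" "c \<in> vecs n k"
  shows "RDH_event n k c t = (\<lambda>(y, m'). (m', RDH_pad n k c m', y)) `
           (SIGMA y:unit_vecs n k. {m' \<in> vecs n k. Upsilon n k y m' = t})"
  using assms RDH_pad_in_vecs by (auto simp: RDH_event_def RDH_enc_eq_iff image_iff)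

lemma card_RDH_event:
  assumes "0 < n" "c \<in> vecs n k"
  shows "card (RDH_event n k c t) =
           (\<Sum>y\<in>unit_vecs n k. card {m' \<in> vecs n k. Upsilon n k y m' = t})"
proof -
  have "card (RDH_event n k c t) =
          card (SIGMA y:unit_vecs n k. {m' \<in> vecs n k. Upsilon n k y m' = t})"
    unfolding RDH_event_eq_image[OF assms] by (rule card_image) (auto simp: inj_on_def)
  then show ?thesis
    using finite_unit_vecs finite_vecs by simp
qed

lemma card_RDH_event_message:
  assumes "0 < n" "c \<in> vecs n k" "m \<in> vecs n k"
  shows "card {(m', x, y) \<in> RDH_event n k c t. m' = m} =
           card {y \<in> unit_vecs n k. Upsilon n k y m = t}"
proof -
  have "{(m', x, y) \<in> RDH_event n k c t. m' = m} =
          (\<lambda>y. (m, RDH_pad n k c m, y)) ` {y \<in> unit_vecs n k. Upsilon n k y m = t}"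
    using assms(3) by (auto simp: RDH_event_eq_image[OF assms(1,2)])
  then show ?thesis
    by (simp add: card_image inj_on_def)
qed

lemma card_Upsilon_level_ge:
  assumes "0 < n" "0 < k" "t < n" and y: "y \<in> unit_vecs n k"
  shows "n ^ (k - 1) \<le> card {m' \<in> vecs n k. Upsilon n k y m' = t}"
proof -
  let ?L = "{m' \<in> vecs n k. Upsilon n k y m' = t}"
  let ?W = "{1..<k} \<rightarrow>\<^sub>E {0..<n}"
  have "?W \<subseteq> (\<lambda>m'. restrict m' {1..<k}) ` ?L"
  proof
    fix w assume w: "w \<in> ?W"
    have "coprime (y 0) n"
      using y \<open>0 < k\<close> by (auto simp: unit_vecs_def)
    then obtain v where "v < n" and v: "[v * y 0 + (\<Sum>i\<in>{1..<k}. w i * y i) = t] (mod n)"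
      using exists_cong_affine_unit \<open>0 < n\<close> by blast
    define m' where "m' = w(0 := v)"
    have "{..<k} = insert 0 {1..<k}"
      using \<open>0 < k\<close> by auto
    moreover have "(\<Sum>i\<in>{1..<k}. m' i * y i) = (\<Sum>i\<in>{1..<k}. w i * y i)"
      by (rule sum.cong) (simp_all add: m'_def)
    ultimately have "(\<Sum>i<k. m' i * y i) = v * y 0 + (\<Sum>i\<in>{1..<k}. w i * y i)"
      by (simp add: m'_def)
    then have "Upsilon n k y m' = t"
      using v \<open>t < n\<close> by (simp add: Upsilon_def cong_def)
    moreover have "m' \<in> vecs n k"
      using w \<open>v < n\<close> \<open>0 < k\<close> by (auto simp: m'_def vecs_def PiE_iff extensional_def)
    moreover have "restrict m' {1..<k} = w"
      using w by (auto simp: m'_def PiE_iff extensional_def)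
    ultimately show "w \<in> (\<lambda>m'. restrict m' {1..<k}) ` ?L"
      by blast
  qed
  moreover have "finite ?L"
    using finite_vecs by simp
  ultimately have "card ?W \<le> card ((\<lambda>m'. restrict m' {1..<k}) ` ?L)"
    by (intro card_mono finite_imageI)
  also have "\<dots> \<le> card ?L"
    using \<open>finite ?L\<close> by (rule card_image_le)
  finally have "card ?W \<le> card ?L" .
  then show ?thesis
    by (simp add: card_PiE)
qed

lemma card_RDH_event_ge:
  assumes "0 < n" "0 < k" "c \<in> vecs n k" "t < n"
  shows "card (unit_vecs n k) * n ^ (k - 1) \<le> card (RDH_event n k c t)"
proof -
  have "card (unit_vecs n k) * n ^ (k - 1) = (\<Sum>y\<in>unit_vecs n k. n ^ (k - 1))"
    by simp
  also have "\<dots> \<le> (\<Sum>y\<in>unit_vecs n k. card {m' \<in> vecs n k. Upsilon n k y m' = t})"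
    using assms by (intro sum_mono card_Upsilon_level_ge)
  also have "\<dots> = card (RDH_event n k c t)"
    using assms by (simp add: card_RDH_event)
  finally show ?thesis .
qed

lemma cong_of_Upsilon_eq:
  assumes "j < k" "\<And>i. i \<noteq> j \<Longrightarrow> y i = y' i" "Upsilon n k y m = Upsilon n k y' m"
  shows "[m j * y j = m j * y' j] (mod n)"
proof -
  let ?rest = "\<lambda>y. \<Sum>i\<in>{..<k} - {j}. m i * y i"
  have split: "(\<Sum>i<k. m i * y i) = m j * y j + ?rest y" for y :: "nat \<Rightarrow> nat"
    using \<open>j < k\<close> by (simp add: sum.remove)
  have "?rest y = ?rest y'"
    using assms(2) by (intro sum.cong) auto
  then have "[?rest y + m j * y j = ?rest y + m j * y' j] (mod n)"
    using assms(3) by (simp add: Upsilon_def cong_def split add.commute)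
  then show ?thesis
    by (simp add: cong_add_lcancel_nat)
qed

lemma card_Upsilon_fibre_mult_le:
  fixes n p j :: nat and m :: "nat \<Rightarrow> nat"
  assumes p_min: "\<forall>q. prime q \<and> q dvd n \<longrightarrow> p \<le> q"
    and "j < k" "0 < m j" "m j < n"
  shows "card {y \<in> unit_vecs n k. Upsilon n k y m = t} * (p - 1) \<le> card (unit_vecs n k)"
proof -
  let ?F = "{y \<in> unit_vecs n k. Upsilon n k y m = t}"
  define f where "f = (\<lambda>(y :: nat \<Rightarrow> nat, a :: nat). y(j := a * y j mod n))"
  have unit_j: "y j < n \<and> coprime (y j) n" if "y \<in> unit_vecs n k" for y
    using that \<open>j < k\<close> by (auto simp: unit_vecs_def)
  have coprime_a: "coprime a n" if "a \<in> {1..<p}" for a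
    using that coprime_of_less_min_prime_divisor[OF p_min] by simp
  have "f (y, a) \<in> unit_vecs n k" if "y \<in> ?F" "a \<in> {1..<p}" for y a
  proof -
    have "coprime (a * y j mod n) n" "a * y j mod n < n"
      using that unit_j coprime_a \<open>m j < n\<close> by (auto simp: coprime_mod_left_iff)
    with that \<open>j < k\<close> show ?thesis
      by (auto simp: f_def unit_vecs_def PiE_iff extensional_def)
  qed
  then have image_f: "f ` (?F \<times> {1..<p}) \<subseteq> unit_vecs n k"
    by auto
  have "y = y' \<and> a = a'"
    if y: "y \<in> unit_vecs n k" "Upsilon n k y m = t" and a: "a \<in> {1..<p}"
      and y': "y' \<in> unit_vecs n k" "Upsilon n k y' m = t" and a': "a' \<in> {1..<p}"
      and eq: "f (y, a) = f (y', a')" for y a y' a'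
  proof -
    have off_j: "y i = y' i" if "i \<noteq> j" for i
      using fun_cong[OF eq, of i] that by (simp add: f_def)
    have at_j: "[a * y j = a' * y' j] (mod n)"
      using fun_cong[OF eq, of j] by (simp add: f_def cong_def)
    have at_j_scaled: "[m j * y j = m j * y' j] (mod n)"
      using y(2) y'(2) by (intro cong_of_Upsilon_eq[OF \<open>j < k\<close>]) (auto intro: off_j)
    have "a * (m j * y j) = m j * (a * y j)"
      by (simp add: ac_simps)
    also have "[m j * (a * y j) = m j * (a' * y' j)] (mod n)"
      using at_j by (rule cong_mult[OF cong_refl])
    also have "m j * (a' * y' j) = a' * (m j * y' j)"
      by (simp add: ac_simps)
    also have "[a' * (m j * y' j) = a' * (m j * y j)] (mod n)"
      using at_j_scaled by (rule cong_mult[OF cong_refl cong_sym])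
    finally have "[a * (m j * y j) = a' * (m j * y j)] (mod n)" .
    moreover have "\<not> n dvd m j * y j"
    proof
      assume "n dvd m j * y j"
      then have "n dvd m j"
        using unit_j[OF y(1)] by (simp add: coprime_commute coprime_dvd_mult_left_iff)
      with \<open>0 < m j\<close> \<open>m j < n\<close> show False
        by (simp add: nat_dvd_not_less)
    qed
    ultimately have "a = a'"
      using eq_of_cong_mult_less_min_prime_divisor[OF p_min] a a' by simp
    then have "[y j = y' j] (mod n)"
      using at_j coprime_a[OF a] cong_mult_lcancel_nat by blast
    then have "y j = y' j"
      using unit_j y(1) y'(1) cong_less_imp_eq_nat by blast
    with off_j \<open>a = a'\<close> show "y = y' \<and> a = a'"
      by (metis ext)
  qed
  then have "inj_on f (?F \<times> {1..<p})"
    by (auto simp: inj_on_def)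
  then have "card (?F \<times> {1..<p}) = card (f ` (?F \<times> {1..<p}))"
    by (simp add: card_image)
  also have "\<dots> \<le> card (unit_vecs n k)"
    using image_f by (rule card_mono[OF finite_unit_vecs])
  finally show ?thesis
    by (simp add: card_cartesian_product)
qed

theorem mainTheorem6:
  fixes n k p t :: nat and m c :: "nat \<Rightarrow> nat"
  assumes "odd n" and "n > 1" and "k \<ge> 1"
    and "prime p" and "p dvd n" and "\<forall>q. prime q \<and> q dvd n \<longrightarrow> p \<le> q"
    and "m \<in> vecs n k" and "m \<noteq> (\<lambda>i\<in>{0..<k}. 0)"
    and "c \<in> vecs n k" and "t < n"
    and "RDH_event n k c t \<noteq> {}"
  shows "RDH_cond_prob n k m c t \<le> 1 / ((real p - 1) * real n ^ (k - 1))"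
proof -
  obtain j where "j < k" "0 < m j"
    using assms(7,8) by (auto simp: vecs_def PiE_iff extensional_def fun_eq_iff split: if_splits)
  then have "m j < n"
    using assms(7) by (auto simp: vecs_def)
  define D where "D = card (RDH_event n k c t)"
  define N where "N = card {y \<in> unit_vecs n k. Upsilon n k y m = t}"
  have "N * (p - 1) * n ^ (k - 1) \<le> card (unit_vecs n k) * n ^ (k - 1)"
    unfolding N_def
    using card_Upsilon_fibre_mult_le[of n p j k m, OF assms(6) \<open>j < k\<close> \<open>0 < m j\<close> \<open>m j < n\<close>]
    by (rule mult_le_mono1)
  also have "\<dots> \<le> D"
    unfolding D_def using assms(2,3,9,10) by (intro card_RDH_event_ge) auto
  finally have "real (N * (p - 1) * n ^ (k - 1)) \<le> real D"
    by (simp only: of_nat_le_iff)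
  then have bound: "real N * (real p - 1) * real n ^ (k - 1) \<le> real D"
    using prime_ge_2_nat[OF assms(4)] by (simp add: of_nat_diff)
  have "0 < D"
    using assms(11) finite_RDH_event by (simp add: D_def card_gt_0_iff)
  have "RDH_cond_prob n k m c t = real N / real D"
    using assms(2,7,9) by (simp add: RDH_cond_prob_def card_RDH_event_message N_def D_def)
  also have "\<dots> \<le> 1 / ((real p - 1) * real n ^ (k - 1))"
    using bound \<open>0 < D\<close> prime_ge_2_nat[OF assms(4)] assms(2)
    by (simp add: divide_simps mult.assoc)
  finally show ?thesis .
qed

end
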